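(* Let $G$ be a group generated by elements $x_1,\dots,x_n$ such that $[e]_g$ is a subgroup of $G$ for every $g\in G$. Then: (1) $\gamma_2(G)=[e]_{x_1}[e]_{x_2}\cdots[e]_{x_{n-1}}$ (a product of subgroups of $G$); (2) if $k\ge 1$ and $h_1,\dots,h_s\in G$ are such that $\gamma_k(G)=[e]_{h_1}[e]_{h_2}\cdots[e]_{h_s}$, and $p_{ij}=[x_i,h_j]$ for $i=1,\dots,n$, $j=1,\dots,s$, then $\gamma_{k+1}(G)=\prod_{i=1}^{n}\prod_{j=1}^{s}[e]_{p_{ij}}$.
   Context: $[x,y]=x^{-1}y^{-1}xy$. For $g\in G$, $[e]_g=\{[x,g]\mid x\in G\}$ (the twisted conjugacy class of the unit element for the inner automorphism $x\mapsto g^{-1}xg$). $\gamma_1(G)=G$, $\gamma_{k+1}(G)=[\gamma_k(G),G]$ is the lower central series. For subgroups $A_1,\dots,A_m$, $A_1\cdots A_m$ denotes the set of products $a_1\cdots a_m$ with $a_i\in A_i$. *)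

theory Defs
  imports "HOL-Algebra.Algebra"
begin

definition comm :: "('a, 'b) monoid_scheme \<Rightarrow> 'a \<Rightarrow> 'a \<Rightarrow> 'a" where
  "comm G x y = inv\<^bsub>G\<^esub> x \<otimes>\<^bsub>G\<^esub> inv\<^bsub>G\<^esub> y \<otimes>\<^bsub>G\<^esub> x \<otimes>\<^bsub>G\<^esub> y"

definition eclass :: "('a, 'b) monoid_scheme \<Rightarrow> 'a \<Rightarrow> 'a set" where
  "eclass G g = {comm G x g | x. x \<in> carrier G}"

text \<open>Lower central series: gamma G 1 = G, gamma G (k+1) = [gamma G k, G]
  (the subgroup generated by the commutators). gamma G 0 is set to G as a dummy.\<close>
primrec gamma :: "('a, 'b) monoid_scheme \<Rightarrow> nat \<Rightarrow> 'a set" where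
  "gamma G 0 = carrier G"
| "gamma G (Suc k) = (if k = 0 then carrier G
     else generate G {comm G a g | a g. a \<in> gamma G k \<and> g \<in> carrier G})"

definition set_prod_list :: "('a, 'b) monoid_scheme \<Rightarrow> 'a set list \<Rightarrow> 'a set" where
  "set_prod_list G As = foldr (\<lambda>A B. A <#>\<^bsub>G\<^esub> B) As {\<one>\<^bsub>G\<^esub>}"

end

theory Submission
  imports Defs
begin

text \<open>Conjugating \<open>[a,g]\<close> by \<open>y\<close> gives \<open>[a y\<inverse>, g] [y\<inverse>, g]\<inverse>\<close>, so every class \<open>[e]\<^sub>g\<close> that is a
  subgroup is normal, and the product \<open>N\<close> of the classes in question is a normal subgroup
  with \<open>[y,p] \<in> N\<close> for each of its factors \<open>[e]\<^sub>p\<close>: every such \<open>p\<close> is central modulo \<open>N\<close>.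
  Since \<open>N\<close> is normal, \<open>{b. [b,a] \<in> N}\<close> is a subgroup, so it is all of \<open>G\<close> as soon as it contains
  the generators. In (1) this makes \<open>x\<^sub>n\<close> central modulo \<open>N\<close> as well, so \<open>G/N\<close> is abelian and
  \<open>\<gamma>\<^sub>2(G) \<subseteq> N\<close>. In (2) the \<open>p\<^sub>i\<^sub>j\<close> lie in the preimage \<open>Z\<close> of the centre of \<open>G/N\<close>, a normal
  subgroup; hence \<open>[e]\<^sub>h\<^sub>j \<subseteq> Z\<close> for every \<open>j\<close>, so \<open>\<gamma>\<^sub>k(G) \<subseteq> Z\<close>, i.e. \<open>\<gamma>\<^sub>k\<^sub>+\<^sub>1(G) \<subseteq> N\<close>. The reverse
  inclusions hold because \<open>[e]\<^sub>p \<subseteq> \<gamma>\<^sub>k\<^sub>+\<^sub>1(G)\<close> whenever \<open>p \<in> \<gamma>\<^sub>k(G)\<close>.\<close>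

definition centralizer_mod :: "('a, 'b) monoid_scheme \<Rightarrow> 'a set \<Rightarrow> 'a \<Rightarrow> 'a set" where
  "centralizer_mod G N a = {b \<in> carrier G. comm G b a \<in> N}"

definition center_mod :: "('a, 'b) monoid_scheme \<Rightarrow> 'a set \<Rightarrow> 'a set" where
  "center_mod G N = {z \<in> carrier G. \<forall>y\<in>carrier G. comm G z y \<in> N}"

context group
begin

lemma inv_mult_cancel_left [simp]:
  "x \<in> carrier G \<Longrightarrow> y \<in> carrier G \<Longrightarrow> inv x \<otimes> (x \<otimes> y) = y"
  by (simp add: m_assoc[symmetric])

lemma mult_inv_cancel_left [simp]:
  "x \<in> carrier G \<Longrightarrow> y \<in> carrier G \<Longrightarrow> x \<otimes> (inv x \<otimes> y) = y"
  by (simp add: m_assoc[symmetric])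

lemma comm_closed [simp]: "a \<in> carrier G \<Longrightarrow> b \<in> carrier G \<Longrightarrow> comm G a b \<in> carrier G"
  by (simp add: comm_def)

lemma inv_comm [simp]: "a \<in> carrier G \<Longrightarrow> b \<in> carrier G \<Longrightarrow> inv (comm G a b) = comm G b a"
  by (simp add: comm_def m_assoc inv_mult_group)

lemma comm_self [simp]: "a \<in> carrier G \<Longrightarrow> comm G a a = \<one>"
  by (simp add: comm_def m_assoc)

lemma comm_one_left [simp]: "a \<in> carrier G \<Longrightarrow> comm G \<one> a = \<one>"
  by (simp add: comm_def m_assoc)

lemma comm_mult_left:
  "x \<in> carrier G \<Longrightarrow> y \<in> carrier G \<Longrightarrow> a \<in> carrier G \<Longrightarrow>
    comm G (x \<otimes> y) a = (inv y \<otimes> comm G x a \<otimes> y) \<otimes> comm G y a"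
  by (simp add: comm_def m_assoc inv_mult_group)

lemma comm_inv_left:
  "x \<in> carrier G \<Longrightarrow> a \<in> carrier G \<Longrightarrow> comm G (inv x) a = x \<otimes> inv (comm G x a) \<otimes> inv x"
  by (simp add: comm_def m_assoc inv_mult_group)

lemma comm_eq_inv_mult_conj:
  "a \<in> carrier G \<Longrightarrow> y \<in> carrier G \<Longrightarrow> comm G a y = inv a \<otimes> (inv y \<otimes> a \<otimes> y)"
  by (simp add: comm_def m_assoc)

lemma conj_eq_mult_comm:
  "x \<in> carrier G \<Longrightarrow> c \<in> carrier G \<Longrightarrow> x \<otimes> c \<otimes> inv x = c \<otimes> comm G c (inv x)"
  by (simp add: comm_def m_assoc)

lemma conj_comm_eq:
  "x \<in> carrier G \<Longrightarrow> y \<in> carrier G \<Longrightarrow> g \<in> carrier G \<Longrightarrow>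
    inv y \<otimes> comm G x g \<otimes> y = comm G (x \<otimes> y) g \<otimes> inv (comm G y g)"
  by (simp add: comm_def m_assoc inv_mult_group)

lemma comm_mem_eclass: "y \<in> carrier G \<Longrightarrow> comm G y g \<in> eclass G g"
  by (auto simp: eclass_def)

lemma eclass_subset_carrier: "g \<in> carrier G \<Longrightarrow> eclass G g \<subseteq> carrier G"
  by (auto simp: eclass_def)

lemma one_mem_eclass: "g \<in> carrier G \<Longrightarrow> \<one> \<in> eclass G g"
  using comm_mem_eclass[of \<one> g] by simp

lemma eclass_normal:
  assumes g: "g \<in> carrier G" and sg: "subgroup (eclass G g) G"
  shows "eclass G g \<lhd> G"
proof (rule normal_invI[OF sg])
  fix y h assume y: "y \<in> carrier G" and "h \<in> eclass G g"
  then obtain a where a: "a \<in> carrier G" and h: "h = comm G a g" by (auto simp: eclass_def)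
  have "y \<otimes> h \<otimes> inv y = comm G (a \<otimes> inv y) g \<otimes> inv (comm G (inv y) g)"
    using conj_comm_eq[OF a _ g, of "inv y"] y h by simp
  then show "y \<otimes> h \<otimes> inv y \<in> eclass G g"
    using a y sg by (simp add: comm_mem_eclass subgroup.m_closed subgroup.m_inv_closed)
qed

lemma centralizer_mod_subgroup:
  assumes N: "N \<lhd> G" and a: "a \<in> carrier G"
  shows "subgroup (centralizer_mod G N a) G"
proof (rule subgroupI)
  interpret N: normal N G by (rule N)
  show "centralizer_mod G N a \<subseteq> carrier G" by (auto simp: centralizer_mod_def)
  show "centralizer_mod G N a \<noteq> {}" using a by (auto simp: centralizer_mod_def)
  fix b assume "b \<in> centralizer_mod G N a"
  then have b: "b \<in> carrier G" "comm G b a \<in> N" by (auto simp: centralizer_mod_def)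
  have "b \<otimes> inv (comm G b a) \<otimes> inv b \<in> N"
    using N.inv_op_closed2[OF b(1) N.m_inv_closed[OF b(2)]] .
  then show "inv b \<in> centralizer_mod G N a"
    using b a by (simp add: centralizer_mod_def comm_inv_left)
  fix c assume "c \<in> centralizer_mod G N a"
  then have c: "c \<in> carrier G" "comm G c a \<in> N" by (auto simp: centralizer_mod_def)
  have "(inv c \<otimes> comm G b a \<otimes> c) \<otimes> comm G c a \<in> N"
    using N.inv_op_closed1[OF c(1) b(2)] c(2) by blast
  then show "b \<otimes> c \<in> centralizer_mod G N a"
    using b c a by (simp add: centralizer_mod_def comm_mult_left)
qed

lemma comm_mem_swap:
  assumes "subgroup H G" "a \<in> carrier G" "b \<in> carrier G" "comm G a b \<in> H"
  shows "comm G b a \<in> H"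
  using subgroup.m_inv_closed[OF assms(1,4)] assms(2,3) by simp

lemma comm_mem_normal_of_generate:
  assumes N: "N \<lhd> G" and gen: "generate G S = carrier G" and a: "a \<in> carrier G"
    and S: "\<And>s. s \<in> S \<Longrightarrow> comm G s a \<in> N" and y: "y \<in> carrier G"
  shows "comm G y a \<in> N"
proof -
  have "S \<subseteq> centralizer_mod G N a"
    using S gen generate.incl[of _ S G] by (auto simp: centralizer_mod_def)
  then have "carrier G \<subseteq> centralizer_mod G N a"
    using generate_subgroup_incl[OF _ centralizer_mod_subgroup[OF N a]] gen by blast
  then show ?thesis using y by (auto simp: centralizer_mod_def)
qed

lemma center_mod_normal:
  assumes N: "N \<lhd> G"
  shows "center_mod G N \<lhd> G"
proof -
  interpret N: normal N G by (rule N)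
  have N_sub: "N \<subseteq> center_mod G N"
  proof
    fix c assume c: "c \<in> N"
    then have cc: "c \<in> carrier G" using N.subset by blast
    have "inv c \<otimes> (inv y \<otimes> c \<otimes> y) \<in> N" if "y \<in> carrier G" for y
      using N.inv_op_closed1[OF that c] c by blast
    then show "c \<in> center_mod G N" using cc by (simp add: center_mod_def comm_eq_inv_mult_conj)
  qed
  have eq: "center_mod G N = carrier G \<inter> (\<Inter>y\<in>carrier G. centralizer_mod G N y)"
    by (auto simp: center_mod_def centralizer_mod_def)
  have sg: "subgroup (center_mod G N) G"
  proof (rule subgroupI)
    show "center_mod G N \<subseteq> carrier G" by (auto simp: center_mod_def)
    show "center_mod G N \<noteq> {}" using N_sub N.one_closed by blast
    fix b c assume "b \<in> center_mod G N" "c \<in> center_mod G N"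
    then show "inv b \<in> center_mod G N" "b \<otimes> c \<in> center_mod G N" unfolding eq
      by (auto intro: subgroup.m_inv_closed subgroup.m_closed centralizer_mod_subgroup[OF N])
  qed
  show ?thesis
  proof (rule normal_invI[OF sg])
    fix x c assume x: "x \<in> carrier G" and c: "c \<in> center_mod G N"
    then have "comm G c (inv x) \<in> center_mod G N"
      using N_sub by (auto simp: center_mod_def)
    then show "x \<otimes> c \<otimes> inv x \<in> center_mod G N"
      using conj_eq_mult_comm[OF x] c subgroup.m_closed[OF sg] by (auto simp: center_mod_def)
  qed
qed

lemma center_mod_of_eclass_subset:
  assumes N: "subgroup N G" and p: "p \<in> carrier G" and E: "eclass G p \<subseteq> N"
  shows "p \<in> center_mod G N"
proof -
  have "comm G p y \<in> N" if y: "y \<in> carrier G" for y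
    using E comm_mem_eclass[OF y] by (intro comm_mem_swap[OF N y p]) blast
  then show ?thesis using p by (simp add: center_mod_def)
qed

lemma eclass_subset_center_mod_of_generate:
  assumes N: "N \<lhd> G" and gen: "generate G S = carrier G" and g: "g \<in> carrier G"
    and S: "\<And>s. s \<in> S \<Longrightarrow> comm G s g \<in> center_mod G N"
  shows "eclass G g \<subseteq> center_mod G N"
proof
  fix c assume "c \<in> eclass G g"
  then obtain y where "y \<in> carrier G" and "c = comm G y g" by (auto simp: eclass_def)
  then show "c \<in> center_mod G N"
    using comm_mem_normal_of_generate[OF center_mod_normal[OF N] gen g S] by blast
qed

lemma center_mod_eq_carrier_of_generate:
  assumes N: "N \<lhd> G" and gen: "generate G S = carrier G" and S: "S \<subseteq> center_mod G N"
  shows "center_mod G N = carrier G"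
  using generate_subgroup_incl[OF S normal_invE(1)[OF center_mod_normal[OF N]]] gen
  by (auto simp: center_mod_def)

lemma center_mod_of_generate_insert:
  assumes N: "N \<lhd> G" and gen: "generate G (insert u S) = carrier G" and S: "S \<subseteq> center_mod G N"
  shows "u \<in> center_mod G N"
proof -
  have u: "u \<in> carrier G" using gen generate.incl[of u "insert u S" G] by blast
  have N_sg: "subgroup N G" by (rule normal_invE(1)[OF N])
  have comm_u: "comm G y u \<in> N" if y: "y \<in> carrier G" for y
  proof (rule comm_mem_normal_of_generate[OF N gen u _ y])
    fix s assume "s \<in> insert u S"
    then show "comm G s u \<in> N"
      using S u subgroup.one_closed[OF N_sg] by (auto simp: center_mod_def)
  qed
  have "comm G u y \<in> N" if "y \<in> carrier G" for y
    by (rule comm_mem_swap[OF N_sg that u comm_u[OF that]])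
  then show ?thesis using u by (simp add: center_mod_def)
qed

lemma set_prod_list_normal:
  assumes "\<forall>A\<in>set As. A \<lhd> G"
  shows "set_prod_list G As \<lhd> G"
  using assms
proof (induction As)
  case Nil
  then show ?case by (simp add: set_prod_list_def one_is_normal)
next
  case (Cons A As)
  then have A: "A \<lhd> G" and P: "set_prod_list G As \<lhd> G" by auto
  interpret A: normal A G by (rule A)
  interpret P: normal "set_prod_list G As" G by (rule P)
  have eq: "set_prod_list G (A # As) = A <#> set_prod_list G As"
    by (simp add: set_prod_list_def)
  show ?case unfolding eq
  proof (rule normal_invI[OF mult_norm_subgroup[OF A P.subgroup_axioms]])
    fix x h assume x: "x \<in> carrier G" and "h \<in> A <#> set_prod_list G As"
    then obtain a b where a: "a \<in> A" and b: "b \<in> set_prod_list G As" and h: "h = a \<otimes> b"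
      by (auto simp: set_mult_def)
    have "x \<otimes> h \<otimes> inv x = (x \<otimes> a \<otimes> inv x) \<otimes> (x \<otimes> b \<otimes> inv x)"
      using x a b A.subset P.subset h by (simp add: m_assoc)
    then show "x \<otimes> h \<otimes> inv x \<in> A <#> set_prod_list G As"
      using A.inv_op_closed2[OF x a] P.inv_op_closed2[OF x b] by (auto simp: set_mult_def)
  qed
qed

lemma set_prod_list_subset:
  assumes H: "subgroup H G" and "\<forall>A\<in>set As. A \<subseteq> H"
  shows "set_prod_list G As \<subseteq> H"
  using assms(2)
proof (induction As)
  case Nil
  then show ?case using subgroup.one_closed[OF H] by (simp add: set_prod_list_def)
next
  case (Cons A As)
  then show ?case using subgroup.m_closed[OF H]
    by (auto simp: set_prod_list_def set_mult_def)
qed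

lemma one_mem_set_prod_list:
  assumes "\<forall>A\<in>set As. \<one> \<in> A"
  shows "\<one> \<in> set_prod_list G As"
  using assms
proof (induction As)
  case Nil
  then show ?case by (simp add: set_prod_list_def)
next
  case (Cons A As)
  then have "\<one> \<otimes> \<one> \<in> A <#> set_prod_list G As"
    unfolding set_mult_def by (intro UN_I) auto
  then show ?case by (simp add: set_prod_list_def)
qed

lemma factor_subset_set_prod_list:
  assumes "\<forall>A\<in>set As. \<one> \<in> A \<and> A \<subseteq> carrier G" and "B \<in> set As"
  shows "B \<subseteq> set_prod_list G As"
  using assms
proof (induction As)
  case Nil
  then show ?case by simp
next
  case (Cons A As)
  have A: "\<one> \<in> A" "A \<subseteq> carrier G" and one: "\<one> \<in> set_prod_list G As"
    using Cons.prems(1) one_mem_set_prod_list by auto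
  have P: "set_prod_list G (A # As) = A <#> set_prod_list G As"
    by (simp add: set_prod_list_def)
  show ?case
  proof
    fix b assume b: "b \<in> B"
    show "b \<in> set_prod_list G (A # As)"
    proof (cases "B = A")
      case True
      then have "b \<in> carrier G" "b \<otimes> \<one> \<in> A <#> set_prod_list G As"
        using b A one unfolding set_mult_def by auto
      then show ?thesis unfolding P by simp
    next
      case False
      then have b': "b \<in> set_prod_list G As" using Cons b by auto
      have "set_prod_list G As \<subseteq> carrier G"
        using set_prod_list_subset[OF subgroup_self] Cons.prems(1) by auto
      then have "b \<in> carrier G" "\<one> \<otimes> b \<in> A <#> set_prod_list G As"
        using b' A one unfolding set_mult_def by auto
      then show ?thesis unfolding P by simp
    qed
  qed
qed

lemma eclass_subset_set_prod_list:
  assumes "\<forall>A\<in>set As. \<exists>g\<in>carrier G. A = eclass G g" and "eclass G g \<in> set As"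
  shows "eclass G g \<subseteq> set_prod_list G As"
proof (rule factor_subset_set_prod_list[OF _ assms(2)], intro ballI)
  fix A assume "A \<in> set As"
  then obtain a where "a \<in> carrier G" "A = eclass G a" using assms(1) by blast
  then show "\<one> \<in> A \<and> A \<subseteq> carrier G" by (simp add: one_mem_eclass eclass_subset_carrier)
qed

lemma gamma_subgroup: "subgroup (gamma G k) G"
proof (induction k)
  case 0
  then show ?case by (simp add: subgroup_self)
next
  case (Suc k)
  then have "{comm G a g | a g. a \<in> gamma G k \<and> g \<in> carrier G} \<subseteq> carrier G"
    using subgroup.subset by fastforce
  then show ?case by (simp add: subgroup_self generate_is_subgroup)
qed

lemma gamma_Suc_subset:
  assumes k: "k \<ge> 1" and N: "subgroup N G" and Z: "gamma G k \<subseteq> center_mod G N"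
  shows "gamma G (Suc k) \<subseteq> N"
proof -
  have "{comm G a g | a g. a \<in> gamma G k \<and> g \<in> carrier G} \<subseteq> N"
    using Z by (auto simp: center_mod_def)
  then show ?thesis using k generate_subgroup_incl[OF _ N] by simp
qed

lemma eclass_subset_gamma_Suc:
  assumes k: "k \<ge> 1" and p: "p \<in> gamma G k"
  shows "eclass G p \<subseteq> gamma G (Suc k)"
proof
  fix c assume "c \<in> eclass G p"
  then obtain y where y: "y \<in> carrier G" and c: "c = comm G y p" by (auto simp: eclass_def)
  have pc: "p \<in> carrier G" using p subgroup.subset[OF gamma_subgroup] by blast
  have "comm G p y \<in> {comm G a g | a g. a \<in> gamma G k \<and> g \<in> carrier G}"
    using p y by blast
  from generate.inv[where G = G, OF this] show "c \<in> gamma G (Suc k)" using k y pc c by simp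
qed

lemma eclass_subset_gamma_2: "y \<in> carrier G \<Longrightarrow> eclass G y \<subseteq> gamma G 2"
  using eclass_subset_gamma_Suc[of 1 y] by (simp add: numeral_2_eq_2)

lemma gamma_2_eq_set_prod_eclass:
  assumes x: "\<forall>i\<in>{1..n}. x i \<in> carrier G"
    and gen: "generate G (x ` {1..n}) = carrier G"
    and sg: "\<forall>i\<in>{1..<n}. subgroup (eclass G (x i)) G"
  shows "gamma G 2 = set_prod_list G (map (\<lambda>i. eclass G (x i)) [1..<n])"
    (is "_ = ?N")
proof
  have xc: "x i \<in> carrier G" if "i \<in> {1..n}" for i using x that by blast
  have N: "?N \<lhd> G"
    using x sg by (intro set_prod_list_normal) (auto intro!: eclass_normal)
  then have N_sg: "subgroup ?N G" by (rule normal_invE(1))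
  have central: "x i \<in> center_mod G ?N" if i: "i \<in> {1..<n}" for i
  proof (rule center_mod_of_eclass_subset[OF N_sg])
    show "eclass G (x i) \<subseteq> ?N" using i x by (intro eclass_subset_set_prod_list) auto
  qed (use i xc in simp)
  have "x ` {1..n} \<subseteq> center_mod G ?N"
  proof (cases "n = 0")
    case False
    then have "{1..n} = insert n {1..<n}" by auto
    then have insert: "x ` {1..n} = insert (x n) (x ` {1..<n})" by simp
    have S: "x ` {1..<n} \<subseteq> center_mod G ?N" by (rule image_subsetI) (rule central)
    have "x n \<in> center_mod G ?N"
      by (rule center_mod_of_generate_insert[OF N _ S]) (simp only: gen flip: insert)
    then show ?thesis using S unfolding insert by (rule insert_subsetI)
  qed simp
  then have "carrier G \<subseteq> center_mod G ?N"
    using center_mod_eq_carrier_of_generate[OF N gen] by simp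
  then show "gamma G 2 \<subseteq> ?N"
    using gamma_Suc_subset[OF _ N_sg, of 1] by (simp add: numeral_2_eq_2)
  show "?N \<subseteq> gamma G 2"
    using x eclass_subset_gamma_2 by (intro set_prod_list_subset[OF gamma_subgroup]) auto
qed

lemma gamma_Suc_eq_set_prod_eclass:
  assumes x: "\<forall>i\<in>{1..n}. x i \<in> carrier G"
    and gen: "generate G (x ` {1..n}) = carrier G"
    and k: "k \<ge> 1" and h: "\<forall>j\<in>{1..s}. h j \<in> carrier G"
    and gk: "gamma G k = set_prod_list G (map (\<lambda>j. eclass G (h j)) [1..<s+1])"
    and sg: "\<forall>i\<in>{1..n}. \<forall>j\<in>{1..s}. subgroup (eclass G (comm G (x i) (h j))) G"
  shows "gamma G (k + 1) = set_prod_list G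
    (concat (map (\<lambda>i. map (\<lambda>j. eclass G (comm G (x i) (h j))) [1..<s+1]) [1..<n+1]))"
    (is "_ = set_prod_list G ?L")
proof -
  have xc: "x i \<in> carrier G" if "i \<in> {1..n}" for i using x that by blast
  have hc: "h j \<in> carrier G" if "j \<in> {1..s}" for j using h that by blast
  define L where "L = ?L"
  define N where "N = set_prod_list G L"
  have atLeastLessThan_plus_one: "{1..<m+1} = {1..m}" for m :: nat by auto
  have set_L: "set L = (\<Union>i\<in>{1..n}. (\<lambda>j. eclass G (comm G (x i) (h j))) ` {1..s})"
    unfolding L_def set_concat set_map set_upt atLeastLessThan_plus_one image_image by simp
  have set_E: "set (map (\<lambda>j. eclass G (h j)) [1..<s+1]) = (\<lambda>j. eclass G (h j)) ` {1..s}"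
    unfolding set_map set_upt atLeastLessThan_plus_one ..
  have L_eclass: "\<forall>A\<in>set L. \<exists>g\<in>carrier G. A = eclass G g"
  proof
    fix A assume "A \<in> set L"
    then obtain i j where "i \<in> {1..n}" "j \<in> {1..s}" "A = eclass G (comm G (x i) (h j))"
      unfolding set_L by blast
    then show "\<exists>g\<in>carrier G. A = eclass G g" using xc hc by auto
  qed
  have N: "N \<lhd> G"
    unfolding N_def using xc hc sg by (intro set_prod_list_normal) (auto simp: set_L intro!: eclass_normal)
  then have N_sg: "subgroup N G" by (rule normal_invE(1))
  have Z_sg: "subgroup (center_mod G N) G" by (rule normal_invE(1)[OF center_mod_normal[OF N]])
  have central: "comm G (x i) (h j) \<in> center_mod G N" if i: "i \<in> {1..n}" and j: "j \<in> {1..s}" for i j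
  proof (rule center_mod_of_eclass_subset[OF N_sg])
    have "eclass G (comm G (x i) (h j)) \<in> set L" unfolding set_L using i j by blast
    then show "eclass G (comm G (x i) (h j)) \<subseteq> N"
      unfolding N_def by (rule eclass_subset_set_prod_list[OF L_eclass])
  qed (use i j xc hc in simp)
  have "eclass G (h j) \<subseteq> center_mod G N" if "j \<in> {1..s}" for j
    using that hc central by (intro eclass_subset_center_mod_of_generate[OF N gen]) auto
  then have "\<forall>A\<in>set (map (\<lambda>j. eclass G (h j)) [1..<s+1]). A \<subseteq> center_mod G N"
    unfolding set_E by blast
  then have "gamma G k \<subseteq> center_mod G N"
    unfolding gk by (rule set_prod_list_subset[OF Z_sg])
  then have "gamma G (Suc k) \<subseteq> N" by (rule gamma_Suc_subset[OF k N_sg])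
  moreover have "N \<subseteq> gamma G (Suc k)"
  proof -
    have "eclass G (h j) \<subseteq> gamma G k" if j: "j \<in> {1..s}" for j
      unfolding gk using j hc by (intro eclass_subset_set_prod_list) (auto simp only: set_E)
    then have "eclass G (comm G (x i) (h j)) \<subseteq> gamma G (Suc k)"
      if "i \<in> {1..n}" "j \<in> {1..s}" for i j
      using that xc comm_mem_eclass by (intro eclass_subset_gamma_Suc[OF k]) blast
    then show ?thesis
      unfolding N_def by (intro set_prod_list_subset[OF gamma_subgroup]) (auto simp: set_L)
  qed
  ultimately show ?thesis by (simp add: N_def L_def)
qed

end

theorem theorem1:
  fixes G :: "('a, 'b) monoid_scheme" and x :: "nat \<Rightarrow> 'a" and n :: nat
  assumes "group G"
    and "\<forall>i\<in>{1..n}. x i \<in> carrier G"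
    and "generate G (x ` {1..n}) = carrier G"
    and "\<forall>g\<in>carrier G. subgroup (eclass G g) G"
  shows "gamma G 2 = set_prod_list G (map (\<lambda>i. eclass G (x i)) [1..<n]) \<and>
    (\<forall>k s h. k \<ge> 1 \<longrightarrow> (\<forall>j\<in>{1..s}. h j \<in> carrier G) \<longrightarrow>
           gamma G k = set_prod_list G (map (\<lambda>j. eclass G (h j)) [1..<s+1]) \<longrightarrow>
           gamma G (k + 1) = set_prod_list G
             (concat (map (\<lambda>i. map (\<lambda>j. eclass G (comm G (x i) (h j))) [1..<s+1]) [1..<n+1])))"
proof -
  interpret group G by (rule assms(1))
  show ?thesis
  proof (intro conjI allI impI)
    show "gamma G 2 = set_prod_list G (map (\<lambda>i. eclass G (x i)) [1..<n])"
      using assms(2-4) by (intro gamma_2_eq_set_prod_eclass) auto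
  next
    fix k s h
    assume "k \<ge> 1" "\<forall>j\<in>{1..s}. h j \<in> carrier G"
      "gamma G k = set_prod_list G (map (\<lambda>j. eclass G (h j)) [1..<s+1])"
    then show "gamma G (k + 1) = set_prod_list G
             (concat (map (\<lambda>i. map (\<lambda>j. eclass G (comm G (x i) (h j))) [1..<s+1]) [1..<n+1]))"
      using assms(2-4) by (intro gamma_Suc_eq_set_prod_eclass) auto
  qed
qed

end
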